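(* Let $T>0$, $x_0,y_0\in\mathbb{R}$, $\gamma_P,\gamma_A>0$, let $a^*$ be the constant action $a^*_t:=\kappa^*(1)$, $t\in[0,T]$, and set $$\beta^*:=\frac{T\gamma_A\gamma_P^2}{2(\gamma_A+\gamma_P)^2}+y_0+T\kappa(\kappa^*(1))-\frac{\gamma_P}{\gamma_A+\gamma_P}\left(x_0+T\kappa^*(1)\right).$$ (i) Let $W\in\mathcal{W}$, so that $(W,a^* )\in\mathcal{C}$. Then $(W,a^* )$ satisfies the Borch rule, i.e. there exists a constant $\alpha>0$ with $$\frac{U_P'\left(X_T^{a^*}-W\right)}{U_A'\left(W-\int_0^T\kappa(a^*_t)\,dt\right)}=\alpha\quad\mathbb{P}\text{-a.s.},$$ if and only if there exists $\beta\in\mathbb{R}$ such that $W=\frac{\gamma_P}{\gamma_A+\gamma_P}X_T^{a^*}+\beta$. Moreover, such a contract $\left(\frac{\gamma_P}{\gamma_A+\gamma_P}X_T^{a^*}+\beta,\,a^*\right)$ belongs to $\mathcal{C}_{PC}$ if and only if $\beta\ge\beta^*$. (ii) With $W^*:=\frac{\gamma_P}{\gamma_A+\gamma_P}X_T^{a^*}+\beta^*$, the contract $(W^*,a^* )$ belongs to $\mathcal{C}_{PC}$ and is optimal for the problem $\sup_{(W,a)\in\mathcal{C}_{PC}}\mathbb{E}[U_P(X_T^a-W)]$.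
   Context: Fix $T>0$. Let $(\Omega,\mathcal{F},\mathbb{P})$ be a probability space carrying a standard one-dimensional Brownian motion $B=(B_t)_{t\in[0,T]}$, and let $\mathbb{F}=(\mathcal{F}_t)_{t\in[0,T]}$ be its natural completed filtration. Let $\mathbb{H}_2$ be the set of $\mathbb{F}$-predictable processes $a=(a_t)_{t\in[0,T]}$ with values in $[0,\infty)$ such that $\mathbb{E}[\exp(q\int_0^T|a_t|^2dt)]<\infty$ for all $q>0$. For $a\in\mathbb{H}_2$ and a fixed $x_0\in\mathbb{R}$, set $X_t^a=x_0+\int_0^t a_s\,ds+B_t$. Let $\mathcal{W}$ be the set of $\mathcal{F}_T$-measurable random variables $W$ with $\mathbb{E}[\exp(qW)]<\infty$ for all $q\in\mathbb{R}\setminus\{0\}$, and $\mathcal{C}=\{(W,a):W\in\mathcal{W},a\in\mathbb{H}_2\}$. The cost function $\kappa:[0,\infty)\to\mathbb{R}$ is strictly convex, continuous, non-decreasing, with invertible derivative $\kappa'$; $\kappa^*(p)=\arg\sup_{x\ge0}(px-\kappa(x))=(\kappa')^{-1}(p)\ge0$ for $p\ge0$. With $\gamma_P,\gamma_A>0$, $U_P(x)=-\exp(-\gamma_P x)$ and $U_A(x)=-\exp(-\gamma_A x)$. For $y_0\in\mathbb{R}$, the participation constraint (PC) of a contract $(W,a)\in\mathcal{C}$ is $\mathbb{E}[U_A(W-\int_0^T\kappa(a_t)dt)]\ge U_A(y_0)$, and $\mathcal{C}_{PC}$ is the set of contracts in $\mathcal{C}$ satisfying the PC. *)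

theory Defs
  imports "HOL-Probability.Probability"
begin

definition strict_convex_on :: "real set \<Rightarrow> (real \<Rightarrow> real) \<Rightarrow> bool" where
  "strict_convex_on S f \<longleftrightarrow> convex S \<and>
     (\<forall>x\<in>S. \<forall>y\<in>S. \<forall>u. x \<noteq> y \<and> 0 < u \<and> u < 1 \<longrightarrow>
        f (u * x + (1 - u) * y) < u * f x + (1 - u) * f y)"

definition expU :: "real \<Rightarrow> real \<Rightarrow> real" where
  "expU g x = - exp (- g * x)"

definition brownian_motion_on :: "'a measure \<Rightarrow> real \<Rightarrow> (real \<Rightarrow> 'a \<Rightarrow> real) \<Rightarrow> bool" where
  "brownian_motion_on M T B \<longleftrightarrow>
     prob_space M \<and>
     (\<forall>t\<in>{0..T}. B t \<in> borel_measurable M) \<and>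
     (AE \<omega> in M. B 0 \<omega> = 0 \<and> continuous_on {0..T} (\<lambda>t. B t \<omega>)) \<and>
     (\<forall>s t. 0 \<le> s \<and> s < t \<and> t \<le> T \<longrightarrow>
        distributed M lborel (\<lambda>\<omega>. B t \<omega> - B s \<omega>) (normal_density 0 (sqrt (t - s)))) \<and>
     (\<forall>(ts :: nat \<Rightarrow> real) n. 0 \<le> ts 0 \<and> ts n \<le> T \<and> (\<forall>i<n. ts i < ts (Suc i)) \<longrightarrow>
        prob_space.indep_vars M (\<lambda>_. borel) (\<lambda>i \<omega>. B (ts (Suc i)) \<omega> - B (ts i) \<omega>) {..<n})"

definition nat_filt :: "'a measure \<Rightarrow> (real \<Rightarrow> 'a \<Rightarrow> real) \<Rightarrow> real \<Rightarrow> 'a set set" where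
  "nat_filt M B t = sigma_sets (space M)
     ({B s -` A \<inter> space M | s A. s \<in> {0..t} \<and> A \<in> sets borel} \<union> null_sets M)"

definition pred_sets :: "'a measure \<Rightarrow> (real \<Rightarrow> 'a \<Rightarrow> real) \<Rightarrow> real \<Rightarrow> (real \<times> 'a) set set" where
  "pred_sets M B T = sigma_sets ({0..T} \<times> space M)
     ({{0} \<times> A | A. A \<in> nat_filt M B 0} \<union>
      {{s<..t} \<times> A | s t A. 0 \<le> s \<and> s < t \<and> t \<le> T \<and> A \<in> nat_filt M B s})"

definition predictable :: "'a measure \<Rightarrow> (real \<Rightarrow> 'a \<Rightarrow> real) \<Rightarrow> real \<Rightarrow> (real \<Rightarrow> 'a \<Rightarrow> real) \<Rightarrow> bool" where
  "predictable M B T a \<longleftrightarrow>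
     (\<forall>A\<in>sets borel. {p \<in> {0..T} \<times> space M. a (fst p) (snd p) \<in> A} \<in> pred_sets M B T)"

text \<open>The action set H_2.  The AE-clause makes explicit that the pathwise integral of a^2 is
  finite a.s., which is implied by finiteness of E[exp(q int a^2)] read with values in [0,infinity].\<close>
definition H2 :: "'a measure \<Rightarrow> (real \<Rightarrow> 'a \<Rightarrow> real) \<Rightarrow> real \<Rightarrow> (real \<Rightarrow> 'a \<Rightarrow> real) set" where
  "H2 M B T = {a. predictable M B T a \<and>
     (\<forall>t\<in>{0..T}. \<forall>\<omega>\<in>space M. 0 \<le> a t \<omega>) \<and>
     (AE \<omega> in M. set_integrable lborel {0..T} (\<lambda>t. (a t \<omega>)\<^sup>2)) \<and>
     (\<forall>q>0. integrable M (\<lambda>\<omega>. exp (q * (LBINT t:{0..T}. (a t \<omega>)\<^sup>2))))}"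

definition Xproc :: "real \<Rightarrow> (real \<Rightarrow> 'a \<Rightarrow> real) \<Rightarrow> (real \<Rightarrow> 'a \<Rightarrow> real) \<Rightarrow> real \<Rightarrow> 'a \<Rightarrow> real" where
  "Xproc x0 B a t \<omega> = x0 + (LBINT s:{0..t}. a s \<omega>) + B t \<omega>"

definition Wset :: "'a measure \<Rightarrow> (real \<Rightarrow> 'a \<Rightarrow> real) \<Rightarrow> real \<Rightarrow> ('a \<Rightarrow> real) set" where
  "Wset M B T = {W. (\<forall>A\<in>sets borel. W -` A \<inter> space M \<in> nat_filt M B T) \<and>
     (\<forall>q. q \<noteq> 0 \<longrightarrow> integrable M (\<lambda>\<omega>. exp (q * W \<omega>)))}"

definition contracts :: "'a measure \<Rightarrow> (real \<Rightarrow> 'a \<Rightarrow> real) \<Rightarrow> real \<Rightarrow> (('a \<Rightarrow> real) \<times> (real \<Rightarrow> 'a \<Rightarrow> real)) set" where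
  "contracts M B T = Wset M B T \<times> H2 M B T"

text \<open>Expectation of a non-positive extended-real random variable, with value in [-infinity,0].\<close>
definition neg_expect :: "'a measure \<Rightarrow> ('a \<Rightarrow> ereal) \<Rightarrow> ereal" where
  "neg_expect M f = - enn2ereal (\<integral>\<^sup>+\<omega>. e2ennreal (- f \<omega>) \<partial>M)"

text \<open>Agent's realized utility U_A(W - int_0^T kappa(a_t) dt); equals -infinity when the
  cost integral is +infinity (kappa is bounded below on [0,infinity)).\<close>
definition agent_util :: "real \<Rightarrow> real \<Rightarrow> (real \<Rightarrow> real) \<Rightarrow> ('a \<Rightarrow> real) \<Rightarrow> (real \<Rightarrow> 'a \<Rightarrow> real) \<Rightarrow> 'a \<Rightarrow> ereal" where
  "agent_util gA T \<kappa> W a \<omega> =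
     (if set_integrable lborel {0..T} (\<lambda>t. \<kappa> (a t \<omega>))
      then ereal (expU gA (W \<omega> - (LBINT t:{0..T}. \<kappa> (a t \<omega>)))) else -\<infinity>)"

definition contracts_PC :: "'a measure \<Rightarrow> (real \<Rightarrow> 'a \<Rightarrow> real) \<Rightarrow> real \<Rightarrow> real \<Rightarrow> (real \<Rightarrow> real) \<Rightarrow> real
    \<Rightarrow> (('a \<Rightarrow> real) \<times> (real \<Rightarrow> 'a \<Rightarrow> real)) set" where
  "contracts_PC M B T gA \<kappa> y0 = {(W, a) \<in> contracts M B T.
     neg_expect M (agent_util gA T \<kappa> W a) \<ge> ereal (expU gA y0)}"

definition principal_value :: "'a measure \<Rightarrow> (real \<Rightarrow> 'a \<Rightarrow> real) \<Rightarrow> real \<Rightarrow> real \<Rightarrow> real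
    \<Rightarrow> ('a \<Rightarrow> real) \<Rightarrow> (real \<Rightarrow> 'a \<Rightarrow> real) \<Rightarrow> ereal" where
  "principal_value M B T x0 gP W a =
     neg_expect M (\<lambda>\<omega>. ereal (expU gP (Xproc x0 B a T \<omega> - W \<omega>)))"

end

theory Submission
  imports Defs
begin

(* Under the constant action kstar = (kappa')^-1(1) the output is X = x0 + T kstar + B_T, and the
   marginal utilities of the CARA utilities are exponentials of affine functions of W and X: their
   ratio is constant iff W - c X is, c = gP / (gA + gP), which is the Borch rule.  For a linear
   contract c X + beta the agent's expected utility is a Gaussian exponential moment, so the
   participation constraint is a lower bound on beta that binds at betastar.
   Optimality is weak Lagrangian duality.  Choose the multiplier lam so that the first-order
   condition holds along (Wstar, astar).  The utilities are concave and, kstar being the point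
   where kappa has slope 1, x - kappa x <= kstar - kappa kstar for x >= 0.  Hence, pointwise for
   every admissible (W, a),
     U_P(X^a_T - W) + lam U_A(W - int kappa(a)) <= U_P(X - Wstar) + lam U_A(Wstar - T kappa kstar),
   and taking expectations, the participation constraint for (W, a), binding for (Wstar, astar),
   gives E U_P(X^a_T - W) <= E U_P(X - Wstar). *)

lemma nat_filt_subset_sets:
  assumes BM: "brownian_motion_on M T B" and "t \<le> T"
  shows "nat_filt M B t \<subseteq> sets M"
  unfolding nat_filt_def
proof (rule sets.sigma_sets_subset)
  show "{B s -` A \<inter> space M |s A. s \<in> {0..t} \<and> A \<in> sets borel} \<union> null_sets M \<subseteq> sets M"
    using BM \<open>t \<le> T\<close> unfolding brownian_motion_on_def by (fastforce intro: measurable_sets)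
qed

lemma Wset_borel_measurable:
  assumes BM: "brownian_motion_on M T B" and W: "W \<in> Wset M B T"
  shows "W \<in> borel_measurable M"
proof (rule measurableI)
  fix A :: "real set" assume "A \<in> sets borel"
  then show "W -` A \<inter> space M \<in> sets M"
    using W nat_filt_subset_sets[OF BM order_refl] unfolding Wset_def by blast
qed simp

lemma pred_sets_subset_sets_pair:
  assumes BM: "brownian_motion_on M T B" and T: "0 \<le> T"
  shows "pred_sets M B T \<subseteq> sets (lborel \<Otimes>\<^sub>M M)"
  unfolding pred_sets_def
proof (rule sets.sigma_sets_subset')
  show "{0..T} \<times> space M \<in> sets (lborel \<Otimes>\<^sub>M M)" by (rule pair_measureI) auto
  show "{{0} \<times> A |A. A \<in> nat_filt M B 0} \<union>
      {{s<..t} \<times> A |s t A. 0 \<le> s \<and> s < t \<and> t \<le> T \<and> A \<in> nat_filt M B s}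
    \<subseteq> sets (lborel \<Otimes>\<^sub>M M)"
  proof safe
    fix A assume "A \<in> nat_filt M B 0"
    then show "{0} \<times> A \<in> sets (lborel \<Otimes>\<^sub>M M)"
      using nat_filt_subset_sets[OF BM T] by (auto intro!: pair_measureI)
  next
    fix s t A assume "0 \<le> s" "s < t" "t \<le> T" "A \<in> nat_filt M B s"
    then show "{s<..t} \<times> A \<in> sets (lborel \<Otimes>\<^sub>M M)"
      using nat_filt_subset_sets[OF BM, of s] by (auto intro!: pair_measureI)
  qed
qed

lemma predictable_restrict_measurable:
  assumes BM: "brownian_motion_on M T B" and T: "0 \<le> T" and a: "predictable M B T a"
  shows "(\<lambda>p. if p \<in> {0..T} \<times> space M then a (fst p) (snd p) else 0)
    \<in> borel_measurable (lborel \<Otimes>\<^sub>M M)"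
proof (rule measurableI)
  fix A :: "real set" assume A: "A \<in> sets borel"
  let ?D = "{0..T} \<times> space M"
  have level: "{p \<in> ?D. a (fst p) (snd p) \<in> A} \<in> sets (lborel \<Otimes>\<^sub>M M)"
    using a A pred_sets_subset_sets_pair[OF BM T] unfolding predictable_def by blast
  have "?D \<in> sets (lborel \<Otimes>\<^sub>M M)" by (rule pair_measureI) auto
  then have compl: "space (lborel \<Otimes>\<^sub>M M) - ?D \<in> sets (lborel \<Otimes>\<^sub>M M)" by blast
  have "(\<lambda>p. if p \<in> ?D then a (fst p) (snd p) else 0) -` A \<inter> space (lborel \<Otimes>\<^sub>M M)
      = {p \<in> ?D. a (fst p) (snd p) \<in> A} \<union> (if 0 \<in> A then space (lborel \<Otimes>\<^sub>M M) - ?D else {})"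
    by (auto simp: space_pair_measure split: if_splits)
  then show "(\<lambda>p. if p \<in> ?D then a (fst p) (snd p) else 0) -` A \<inter> space (lborel \<Otimes>\<^sub>M M)
      \<in> sets (lborel \<Otimes>\<^sub>M M)"
    using level compl by auto
qed simp

lemma parametric_set_integral_measurable:
  fixes F :: "'a \<times> real \<Rightarrow> real"
  assumes F[measurable]: "F \<in> borel_measurable (M \<Otimes>\<^sub>M lborel)"
    and S[measurable]: "S \<in> sets borel"
  shows "(\<lambda>\<omega>. LBINT t:S. F (\<omega>, t)) \<in> borel_measurable M"
    and "{\<omega> \<in> space M. set_integrable lborel S (\<lambda>t. F (\<omega>, t))} \<in> sets M"
proof -
  have F': "(\<lambda>(\<omega>, t). indicator S t *\<^sub>R F (\<omega>, t)) \<in> borel_measurable (M \<Otimes>\<^sub>M lborel)"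
    by measurable
  show "(\<lambda>\<omega>. LBINT t:S. F (\<omega>, t)) \<in> borel_measurable M"
    unfolding set_lebesgue_integral_def
    by (rule lborel.borel_measurable_lebesgue_integral[OF F'])
  have "(\<lambda>\<omega>. \<integral>\<^sup>+t. ennreal (norm (indicator S t *\<^sub>R F (\<omega>, t))) \<partial>lborel) \<in> borel_measurable M"
    using F' by (intro lborel.borel_measurable_nn_integral) measurable
  then have "{\<omega> \<in> space M. (\<integral>\<^sup>+t. ennreal (norm (indicator S t *\<^sub>R F (\<omega>, t))) \<partial>lborel) < \<infinity>} \<in> sets M"
    by measurable
  moreover have "{\<omega> \<in> space M. set_integrable lborel S (\<lambda>t. F (\<omega>, t))}
     = {\<omega> \<in> space M. (\<integral>\<^sup>+t. ennreal (norm (indicator S t *\<^sub>R F (\<omega>, t))) \<partial>lborel) < \<infinity>}"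
    unfolding set_integrable_def integrable_iff_bounded using F by auto
  ultimately show "{\<omega> \<in> space M. set_integrable lborel S (\<lambda>t. F (\<omega>, t))} \<in> sets M" by simp
qed

lemma predictable_set_integral_measurable:
  fixes \<phi> :: "real \<Rightarrow> real"
  assumes BM: "brownian_motion_on M T B" and T: "0 \<le> T" and a: "predictable M B T a"
    and \<phi>: "continuous_on UNIV \<phi>"
  shows "(\<lambda>\<omega>. LBINT t:{0..T}. \<phi> (a t \<omega>)) \<in> borel_measurable M"
    and "{\<omega> \<in> space M. set_integrable lborel {0..T} (\<lambda>t. \<phi> (a t \<omega>))} \<in> sets M"
proof -
  let ?a = "\<lambda>p. if p \<in> {0..T} \<times> space M then a (fst p) (snd p) else 0"
  define F where "F = (\<lambda>(\<omega>::'a, t::real). \<phi> (?a (t, \<omega>)))"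
  have "(\<lambda>p. \<phi> (?a p)) \<in> borel_measurable (lborel \<Otimes>\<^sub>M M)"
    by (rule borel_measurable_continuous_on[OF \<phi> predictable_restrict_measurable[OF BM T a]])
  then have "(\<lambda>p. \<phi> (?a (snd p, fst p))) \<in> borel_measurable (M \<Otimes>\<^sub>M lborel)"
    by (rule measurable_compose[OF measurable_pair_swap', unfolded case_prod_beta])
  then have F: "F \<in> borel_measurable (M \<Otimes>\<^sub>M lborel)"
    by (simp add: F_def case_prod_beta')
  have integral_eq: "(LBINT t:{0..T}. \<phi> (a t \<omega>)) = (LBINT t:{0..T}. F (\<omega>, t))"
    if "\<omega> \<in> space M" for \<omega>
    by (rule set_lebesgue_integral_cong) (use that in \<open>auto simp: F_def\<close>)
  have integrable_eq: "set_integrable lborel {0..T} (\<lambda>t. \<phi> (a t \<omega>))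
      \<longleftrightarrow> set_integrable lborel {0..T} (\<lambda>t. F (\<omega>, t))" if "\<omega> \<in> space M" for \<omega>
    by (rule set_integrable_cong) (use that in \<open>auto simp: F_def\<close>)
  show "(\<lambda>\<omega>. LBINT t:{0..T}. \<phi> (a t \<omega>)) \<in> borel_measurable M"
    using parametric_set_integral_measurable(1)[OF F, of "{0..T}"] integral_eq by (subst measurable_cong) auto
  have "{\<omega> \<in> space M. set_integrable lborel {0..T} (\<lambda>t. \<phi> (a t \<omega>))}
      = {\<omega> \<in> space M. set_integrable lborel {0..T} (\<lambda>t. F (\<omega>, t))}"
    using integrable_eq by blast
  then show "{\<omega> \<in> space M. set_integrable lborel {0..T} (\<lambda>t. \<phi> (a t \<omega>))} \<in> sets M"
    using parametric_set_integral_measurable(2)[OF F, of "{0..T}"] by simp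
qed


lemma Xproc_borel_measurable:
  assumes BM: "brownian_motion_on M T B" and T: "0 \<le> T" and a: "a \<in> H2 M B T"
  shows "Xproc x0 B a T \<in> borel_measurable M"
proof -
  have "B T \<in> borel_measurable M" using BM T unfolding brownian_motion_on_def by auto
  moreover have "(\<lambda>\<omega>. LBINT t:{0..T}. a t \<omega>) \<in> borel_measurable M"
    using predictable_set_integral_measurable(1)[OF BM T, of a "\<lambda>x. x"] a
    unfolding H2_def by simp
  ultimately show ?thesis unfolding Xproc_def by measurable
qed

lemma agent_util_measurable:
  assumes BM: "brownian_motion_on M T B" and T: "0 \<le> T"
    and a: "a \<in> H2 M B T" and W: "W \<in> Wset M B T" and \<kappa>: "continuous_on {0..} \<kappa>"
  shows "agent_util gA T \<kappa> W a \<in> borel_measurable M"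
proof -
  \<comment> \<open>\<open>\<kappa>\<close> is only continuous on \<open>[0, \<infinity>)\<close>, where the action lives; extend it to \<open>\<real>\<close>.\<close>
  define \<kappa>0 where "\<kappa>0 = (\<lambda>x. \<kappa> (max 0 x))"
  have \<kappa>0: "continuous_on UNIV \<kappa>0"
    unfolding \<kappa>0_def by (rule continuous_on_compose2[OF \<kappa>]) (auto intro!: continuous_intros)
  have pred: "predictable M B T a" and nonneg: "\<And>t \<omega>. t \<in> {0..T} \<Longrightarrow> \<omega> \<in> space M \<Longrightarrow> 0 \<le> a t \<omega>"
    using a unfolding H2_def by auto
  have \<kappa>_eq: "\<kappa> (a t \<omega>) = \<kappa>0 (a t \<omega>)" if "\<omega> \<in> space M" "t \<in> {0..T}" for t \<omega>
    using nonneg[OF that(2,1)] by (simp add: \<kappa>0_def)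
  have "{\<omega> \<in> space M. set_integrable lborel {0..T} (\<lambda>t. \<kappa> (a t \<omega>))}
      = {\<omega> \<in> space M. set_integrable lborel {0..T} (\<lambda>t. \<kappa>0 (a t \<omega>))}"
  proof -
    have "set_integrable lborel {0..T} (\<lambda>t. \<kappa> (a t \<omega>))
        \<longleftrightarrow> set_integrable lborel {0..T} (\<lambda>t. \<kappa>0 (a t \<omega>))" if "\<omega> \<in> space M" for \<omega>
      by (rule set_integrable_cong) (use \<kappa>_eq that in auto)
    then show ?thesis by blast
  qed
  then have integrable: "{\<omega> \<in> space M. set_integrable lborel {0..T} (\<lambda>t. \<kappa> (a t \<omega>))} \<in> sets M"
    using predictable_set_integral_measurable(2)[OF BM T pred \<kappa>0] by simp
  have [measurable]: "(\<lambda>\<omega>. LBINT t:{0..T}. \<kappa> (a t \<omega>)) \<in> borel_measurable M"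
    using predictable_set_integral_measurable(1)[OF BM T pred \<kappa>0] \<kappa>_eq
    by (subst measurable_cong[where g = "\<lambda>\<omega>. LBINT t:{0..T}. \<kappa>0 (a t \<omega>)"])
      (auto intro!: set_lebesgue_integral_cong)
  have [measurable]: "W \<in> borel_measurable M" by (rule Wset_borel_measurable[OF BM W])
  show ?thesis
    unfolding agent_util_def expU_def by (rule measurable_If[OF _ _ integrable]) measurable
qed

section \<open>Exponential moments of Brownian motion\<close>

lemma normal_density_mult_exp:
  assumes T: "0 < T"
  shows "normal_density 0 (sqrt T) x * exp (s * x)
    = exp (s\<^sup>2 * T / 2) * normal_density (s * T) (sqrt T) x"
proof -
  have "-(x - 0)\<^sup>2 / (2 * (sqrt T)\<^sup>2) + s * x = s\<^sup>2 * T / 2 + -(x - s * T)\<^sup>2 / (2 * (sqrt T)\<^sup>2)"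
    using T by (simp add: field_simps power2_eq_square)
  then have "exp (-(x - 0)\<^sup>2 / (2 * (sqrt T)\<^sup>2)) * exp (s * x)
      = exp (s\<^sup>2 * T / 2) * exp (-(x - s * T)\<^sup>2 / (2 * (sqrt T)\<^sup>2))"
    by (simp only: exp_add[symmetric])
  then show ?thesis unfolding normal_density_def by (simp only: mult.assoc mult.left_commute)
qed

lemma brownian_motion_exp_moment:
  assumes BM: "brownian_motion_on M T B" and T: "0 < T"
  shows "(\<integral>\<^sup>+\<omega>. ennreal (exp (s * B T \<omega> + d)) \<partial>M) = ennreal (exp (d + s\<^sup>2 * T / 2))"
proof -
  have D: "distributed M lborel (\<lambda>\<omega>. B T \<omega> - B 0 \<omega>) (\<lambda>x. ennreal (normal_density 0 (sqrt T) x))"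
    using BM T unfolding brownian_motion_on_def by (metis (no_types) diff_zero order_refl)
  have "AE \<omega> in M. B 0 \<omega> = 0" using BM unfolding brownian_motion_on_def by auto
  then have "(\<integral>\<^sup>+\<omega>. ennreal (exp (s * B T \<omega> + d)) \<partial>M)
      = (\<integral>\<^sup>+\<omega>. ennreal (exp (s * (B T \<omega> - B 0 \<omega>) + d)) \<partial>M)"
    by (intro nn_integral_cong_AE) auto
  also have "\<dots> = (\<integral>\<^sup>+x. ennreal (normal_density 0 (sqrt T) x) * ennreal (exp (s * x + d)) \<partial>lborel)"
    using distributed_nn_integral[OF D, of "\<lambda>x. ennreal (exp (s * x + d))"] by simp
  also have "\<dots> = (\<integral>\<^sup>+x. ennreal (exp (d + s\<^sup>2 * T / 2)) * ennreal (normal_density (s * T) (sqrt T) x) \<partial>lborel)"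
    using normal_density_mult_exp[OF T]
    by (intro nn_integral_cong) (simp add: exp_add ennreal_mult'[symmetric] mult_ac)
  also have "\<dots> = ennreal (exp (d + s\<^sup>2 * T / 2))"
    using T by (simp add: nn_integral_cmult nn_integral_eq_integral)
  finally show ?thesis .
qed

lemma constant_action_H2:
  assumes BM: "brownian_motion_on M T B" and k: "0 \<le> k"
  shows "(\<lambda>t \<omega>. k) \<in> H2 M B T"
proof -
  interpret prob_space M using BM unfolding brownian_motion_on_def by simp
  have "{p \<in> {0..T} \<times> space M. k \<in> A} \<in> pred_sets M B T" for A :: "real set"
    unfolding pred_sets_def by (cases "k \<in> A") (auto intro: sigma_sets_top sigma_sets.Empty)
  then have "predictable M B T (\<lambda>t \<omega>. k)" unfolding predictable_def by simp
  then show ?thesis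
    using k by (simp add: H2_def set_integrable_def integrable_indicator_iff emeasure_lborel_Icc_eq)
qed

lemma Xproc_constant_action:
  "0 \<le> T \<Longrightarrow> Xproc x0 B (\<lambda>t \<omega>. k) T \<omega> = x0 + T * k + B T \<omega>"
  by (simp add: Xproc_def set_integral_const)

lemma agent_util_constant_action:
  "0 \<le> T \<Longrightarrow> agent_util gA T \<kappa> W (\<lambda>t \<omega>. k) \<omega> = ereal (expU gA (W \<omega> - T * \<kappa> k))"
  by (simp add: agent_util_def set_integral_const set_integrable_def integrable_indicator_iff
      emeasure_lborel_Icc_eq)

lemma affine_terminal_value_in_Wset:
  assumes BM: "brownian_motion_on M T B" and T: "0 < T"
  shows "(\<lambda>\<omega>. c * B T \<omega> + d) \<in> Wset M B T"
proof -
  have BT: "B T \<in> borel_measurable M" using BM T unfolding brownian_motion_on_def by auto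
  have "(\<lambda>\<omega>. c * B T \<omega> + d) -` A \<inter> space M \<in> nat_filt M B T" if A: "A \<in> sets borel" for A
  proof -
    have "(\<lambda>y. c * y + d) -` A \<in> sets borel"
      using measurable_sets[OF _ A, of "\<lambda>y. c * y + d" borel] by simp
    then have "B T -` ((\<lambda>y. c * y + d) -` A) \<inter> space M
        \<in> {B s -` A \<inter> space M |s A. s \<in> {0..T} \<and> A \<in> sets borel}"
      using T by (intro CollectI exI[of _ T] exI[of _ "(\<lambda>y. c * y + d) -` A"]) simp
    moreover have "(\<lambda>\<omega>. c * B T \<omega> + d) -` A \<inter> space M = B T -` ((\<lambda>y. c * y + d) -` A) \<inter> space M"
      by auto
    ultimately show ?thesis unfolding nat_filt_def by (auto intro: sigma_sets.Basic)
  qed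
  moreover have "integrable M (\<lambda>\<omega>. exp (q * (c * B T \<omega> + d)))" for q
  proof (rule integrableI_nonneg)
    have "(\<integral>\<^sup>+\<omega>. ennreal (exp (q * (c * B T \<omega> + d))) \<partial>M) = ennreal (exp (q * d + (q * c)\<^sup>2 * T / 2))"
      using brownian_motion_exp_moment[OF BM T, of "q * c" "q * d"] by (simp add: algebra_simps)
    then show "(\<integral>\<^sup>+\<omega>. ennreal (exp (q * (c * B T \<omega> + d))) \<partial>M) < \<infinity>" by simp
  qed (use BT in auto)
  ultimately show ?thesis unfolding Wset_def by blast
qed

section \<open>The Borch rule\<close>

lemma deriv_expU: "deriv (expU g) x = g * exp (- g * x)"
proof -
  have "((\<lambda>x. - exp (- g * x)) has_real_derivative g * exp (- g * x)) (at x)"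
    by (auto intro!: derivative_eq_intros)
  then show ?thesis unfolding expU_def[abs_def] by (rule DERIV_imp_deriv)
qed

lemma expU_marginal_ratio:
  assumes "gA + gP \<noteq> 0"
  shows "deriv (expU gP) (X - W) / deriv (expU gA) (W - K)
       = gP / gA * exp ((gA + gP) * (W - gP / (gA + gP) * X) - gA * K)"
proof -
  have "(gA + gP) * (W - gP / (gA + gP) * X) - gA * K = - gP * (X - W) - - gA * (W - K)"
    using assms by (simp add: field_simps)
  then show ?thesis by (simp only: deriv_expU exp_diff times_divide_times_eq)
qed

lemma borch_rule_iff_affine:
  fixes X W :: "'a \<Rightarrow> real"
  assumes gP: "0 < gP" and gA: "0 < gA"
  shows "(\<exists>\<alpha>>0. AE \<omega> in M. deriv (expU gP) (X \<omega> - W \<omega>) / deriv (expU gA) (W \<omega> - K) = \<alpha>)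
     \<longleftrightarrow> (\<exists>\<beta>. AE \<omega> in M. W \<omega> = gP / (gA + gP) * X \<omega> + \<beta>)"
proof -
  define ratio where "ratio \<beta> = gP / gA * exp ((gA + gP) * \<beta> - gA * K)" for \<beta>
  have ratio_eq_iff: "ratio \<beta> = \<alpha> \<longleftrightarrow> \<beta> = (ln (\<alpha> * gA / gP) + gA * K) / (gA + gP)"
    if "0 < \<alpha>" for \<alpha> \<beta>
  proof -
    have "ratio \<beta> = \<alpha> \<longleftrightarrow> exp ((gA + gP) * \<beta> - gA * K) = \<alpha> * gA / gP"
      using gP gA by (auto simp: ratio_def field_simps)
    also have "\<dots> \<longleftrightarrow> (gA + gP) * \<beta> - gA * K = ln (\<alpha> * gA / gP)"
      using that gP gA by (metis divide_pos_pos exp_ln ln_exp mult_pos_pos)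
    also have "\<dots> \<longleftrightarrow> \<beta> = (ln (\<alpha> * gA / gP) + gA * K) / (gA + gP)"
      using gP gA by (auto simp: field_simps)
    finally show ?thesis .
  qed
  have marginal_ratio: "deriv (expU gP) (X \<omega> - W \<omega>) / deriv (expU gA) (W \<omega> - K)
      = ratio (W \<omega> - gP / (gA + gP) * X \<omega>)" for \<omega>
    unfolding ratio_def using gP gA by (simp add: expU_marginal_ratio)
  show ?thesis
    unfolding marginal_ratio
  proof
    assume "\<exists>\<alpha>>0. AE \<omega> in M. ratio (W \<omega> - gP / (gA + gP) * X \<omega>) = \<alpha>"
    then obtain \<alpha> where \<alpha>: "0 < \<alpha>" and ae: "AE \<omega> in M. ratio (W \<omega> - gP / (gA + gP) * X \<omega>) = \<alpha>"
      by blast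
    from ae have "AE \<omega> in M. W \<omega> = gP / (gA + gP) * X \<omega> + (ln (\<alpha> * gA / gP) + gA * K) / (gA + gP)"
      by eventually_elim (use \<alpha> in \<open>auto simp: ratio_eq_iff\<close>)
    then show "\<exists>\<beta>. AE \<omega> in M. W \<omega> = gP / (gA + gP) * X \<omega> + \<beta>" by blast
  next
    assume "\<exists>\<beta>. AE \<omega> in M. W \<omega> = gP / (gA + gP) * X \<omega> + \<beta>"
    then obtain \<beta> where "AE \<omega> in M. W \<omega> = gP / (gA + gP) * X \<omega> + \<beta>" by blast
    then have "AE \<omega> in M. ratio (W \<omega> - gP / (gA + gP) * X \<omega>) = ratio \<beta>"
      by eventually_elim simp
    moreover have "0 < ratio \<beta>" using gP gA by (simp add: ratio_def)
    ultimately show "\<exists>\<alpha>>0. AE \<omega> in M. ratio (W \<omega> - gP / (gA + gP) * X \<omega>) = \<alpha>" by blast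
  qed
qed

section \<open>The participation constraint for linear contracts\<close>

lemma neg_expect_ge_iff:
  assumes "0 \<le> r"
  shows "ereal (- r) \<le> neg_expect M f \<longleftrightarrow> (\<integral>\<^sup>+\<omega>. e2ennreal (- f \<omega>) \<partial>M) \<le> ennreal r"
proof -
  have "ereal (- r) \<le> neg_expect M f \<longleftrightarrow> enn2ereal (\<integral>\<^sup>+\<omega>. e2ennreal (- f \<omega>) \<partial>M) \<le> enn2ereal (ennreal r)"
    unfolding neg_expect_def using assms
    by (subst enn2ereal_ennreal) (auto simp: ereal_minus_le_minus simp flip: uminus_ereal.simps(1))
  then show ?thesis by (simp add: less_eq_ennreal.rep_eq)
qed

lemma linear_contract_agent_disutility:
  assumes BM: "brownian_motion_on M T B" and T: "0 < T"
  shows "(\<integral>\<^sup>+\<omega>. e2ennreal (- agent_util gA T \<kappa> (\<lambda>\<omega>. c * Xproc x0 B (\<lambda>t \<omega>. k) T \<omega> + \<beta>) (\<lambda>t \<omega>. k) \<omega>) \<partial>M)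
       = ennreal (exp (gA * (gA * c\<^sup>2 * T / 2 + T * \<kappa> k - c * (x0 + T * k) - \<beta>)))"
proof -
  have "(\<integral>\<^sup>+\<omega>. e2ennreal (- agent_util gA T \<kappa> (\<lambda>\<omega>. c * Xproc x0 B (\<lambda>t \<omega>. k) T \<omega> + \<beta>) (\<lambda>t \<omega>. k) \<omega>) \<partial>M)
      = (\<integral>\<^sup>+\<omega>. ennreal (exp ((- gA * c) * B T \<omega> + - gA * (c * (x0 + T * k) + \<beta> - T * \<kappa> k))) \<partial>M)"
    using T by (intro nn_integral_cong)
      (simp add: agent_util_constant_action Xproc_constant_action expU_def algebra_simps)
  also have "\<dots> = ennreal (exp (- gA * (c * (x0 + T * k) + \<beta> - T * \<kappa> k) + (- gA * c)\<^sup>2 * T / 2))"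
    by (rule brownian_motion_exp_moment[OF BM T])
  also have "\<dots> = ennreal (exp (gA * (gA * c\<^sup>2 * T / 2 + T * \<kappa> k - c * (x0 + T * k) - \<beta>)))"
    by (simp add: power2_eq_square algebra_simps)
  finally show ?thesis .
qed

lemma linear_contract_in_contracts:
  assumes BM: "brownian_motion_on M T B" and T: "0 < T" and k: "0 \<le> k"
  shows "((\<lambda>\<omega>. c * Xproc x0 B (\<lambda>t \<omega>. k) T \<omega> + \<beta>), (\<lambda>t \<omega>. k)) \<in> contracts M B T"
proof -
  have "(\<lambda>\<omega>. c * Xproc x0 B (\<lambda>t \<omega>. k) T \<omega> + \<beta>) = (\<lambda>\<omega>. c * B T \<omega> + (c * (x0 + T * k) + \<beta>))"
    using T by (simp add: Xproc_constant_action algebra_simps)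
  then show ?thesis
    unfolding contracts_def
    using affine_terminal_value_in_Wset[OF BM T] constant_action_H2[OF BM k] by simp
qed

lemma linear_contract_PC_iff:
  assumes BM: "brownian_motion_on M T B" and T: "0 < T" and gA: "0 < gA" and k: "0 \<le> k"
  shows "((\<lambda>\<omega>. c * Xproc x0 B (\<lambda>t \<omega>. k) T \<omega> + \<beta>), (\<lambda>t \<omega>. k)) \<in> contracts_PC M B T gA \<kappa> y0
     \<longleftrightarrow> gA * c\<^sup>2 * T / 2 + y0 + T * \<kappa> k - c * (x0 + T * k) \<le> \<beta>"
proof -
  have "((\<lambda>\<omega>. c * Xproc x0 B (\<lambda>t \<omega>. k) T \<omega> + \<beta>), (\<lambda>t \<omega>. k)) \<in> contracts_PC M B T gA \<kappa> y0
      \<longleftrightarrow> exp (gA * (gA * c\<^sup>2 * T / 2 + T * \<kappa> k - c * (x0 + T * k) - \<beta>)) \<le> exp (- gA * y0)"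
    using linear_contract_in_contracts[OF BM T k] unfolding contracts_PC_def expU_def
    by (simp add: neg_expect_ge_iff linear_contract_agent_disutility[OF BM T])
  also have "\<dots> \<longleftrightarrow> gA * (gA * c\<^sup>2 * T / 2 + T * \<kappa> k - c * (x0 + T * k) - \<beta>) \<le> gA * (- y0)"
    by simp
  also have "\<dots> \<longleftrightarrow> gA * c\<^sup>2 * T / 2 + y0 + T * \<kappa> k - c * (x0 + T * k) \<le> \<beta>"
    by (subst mult_le_cancel_left_pos[OF gA]) auto
  finally show ?thesis .
qed

section \<open>Lagrangian duality\<close>

lemma strict_convex_on_imp_convex_on:
  assumes strict: "strict_convex_on S f"
  shows "convex_on S f"
proof (rule convex_onI)
  show "convex S" using strict by (simp add: strict_convex_on_def)
  fix t x y :: real assume t: "0 < t" "t < 1" and xy: "x \<in> S" "y \<in> S"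
  show "f ((1 - t) *\<^sub>R x + t *\<^sub>R y) \<le> (1 - t) * f x + t * f y"
  proof (cases "x = y")
    case True
    have "(1 - t) * x + t * x = x" by (simp add: algebra_simps)
    then show ?thesis using True by (simp add: algebra_simps)
  next
    case False
    moreover have "0 < 1 - t" "1 - t < 1" using t by auto
    ultimately have "f ((1 - t) * x + (1 - (1 - t)) * y) < (1 - t) * f x + (1 - (1 - t)) * f y"
      using strict xy unfolding strict_convex_on_def by blast
    then show ?thesis by simp
  qed
qed

text \<open>The library's \<open>convex_on_imp_above_tangent\<close> needs an interior point; here the tangent
  point may be the endpoint of the half-line, where only the right derivative is available.\<close>
lemma convex_on_Ici_above_tangent:
  fixes f :: "real \<Rightarrow> real"
  assumes convex: "convex_on {a..} f" and c: "a \<le> c" and x: "a \<le> x"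
    and deriv: "(f has_real_derivative f') (at c within {a..})"
  shows "f' * (x - c) \<le> f x - f c"
proof (cases x c rule: linorder_cases)
  case less
  then have "c \<in> interior {a..}" using x by simp
  then show ?thesis
    using convex_on_imp_above_tangent[OF convex _ _ _ deriv] x by (simp add: is_interval_connected)
next
  case greater
  have slope_lim: "((\<lambda>y. (f y - f c) / (y - c)) \<longlongrightarrow> f') (at_right c)"
    using deriv unfolding has_field_derivative_iff by (rule tendsto_within_subset) (use c in auto)
  have "\<forall>\<^sub>F y in at_right c. (f y - f c) / (y - c) \<le> (f x - f c) / (x - c)"
    using eventually_at_right_real[OF greater]
  proof eventually_elim
    case (elim y)
    have "f y \<le> (f x - f c) / (x - c) * (y - c) + f c"
      using elim c by (intro convex_onD_Icc' convex_on_subset[OF convex]) auto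
    then show ?case using elim by (simp add: field_split_simps)
  qed
  then have "f' \<le> (f x - f c) / (x - c)"
    by (rule tendsto_upperbound[OF slope_lim]) simp
  then show ?thesis using greater by (simp add: field_simps)
qed simp

text \<open>Both exponentials lie above their tangents at \<open>u'\<close> and \<open>v'\<close>; by \<open>foc\<close> the two tangent
  terms add up to a nonnegative multiple of \<open>(u + v) - (u' + v') \<le> 0\<close>.\<close>
lemma exp_utility_lagrangian_le:
  fixes gP gA lam u v u' v' :: real
  assumes gP: "0 < gP" and lam: "0 \<le> lam"
    and foc: "lam * gA * exp (- gA * v') = gP * exp (- gP * u')"
    and sum: "u + v \<le> u' + v'"
  shows "exp (- gP * u') + lam * exp (- gA * v') \<le> exp (- gP * u) + lam * exp (- gA * v)"
proof -
  have exp_tangent: "exp p * (1 + (q - p)) \<le> exp q" for p q :: real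
    using mult_left_mono[OF exp_ge_add_one_self[of "q - p"], of "exp p"] by (simp add: mult_exp_exp)
  have P: "exp (- gP * u') - gP * exp (- gP * u') * (u - u') \<le> exp (- gP * u)"
    using exp_tangent[of "- gP * u'" "- gP * u"] by (simp add: algebra_simps)
  have "lam * exp (- gA * v') - lam * gA * exp (- gA * v') * (v - v') \<le> lam * exp (- gA * v)"
    using mult_left_mono[OF exp_tangent[of "- gA * v'" "- gA * v"] lam] by (simp add: algebra_simps)
  then have A: "lam * exp (- gA * v') - gP * exp (- gP * u') * (v - v') \<le> lam * exp (- gA * v)"
    unfolding foc .
  have "0 \<le> gP * exp (- gP * u') * ((u' - u) + (v' - v))"
    using gP sum by simp
  then show ?thesis using P A by (simp add: algebra_simps)
qed

lemma set_integral_output_minus_cost_le: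
  fixes \<kappa> f :: "real \<Rightarrow> real"
  assumes T: "0 \<le> T" and tangent: "\<And>x. 0 \<le> x \<Longrightarrow> \<kappa> k + (x - k) \<le> \<kappa> x"
    and nonneg: "\<And>t. t \<in> {0..T} \<Longrightarrow> 0 \<le> f t"
    and cost: "set_integrable lborel {0..T} (\<lambda>t. \<kappa> (f t))"
  shows "(LBINT t:{0..T}. f t) - (LBINT t:{0..T}. \<kappa> (f t)) \<le> T * k - T * \<kappa> k"
proof (cases "set_integrable lborel {0..T} f")
  case True
  have "(LBINT t:{0..T}. f t) - (LBINT t:{0..T}. \<kappa> (f t)) = (LBINT t:{0..T}. f t - \<kappa> (f t))"
    by (rule set_integral_diff(2)[OF True cost, symmetric])
  also have "\<dots> \<le> (LBINT t:{0..T}. k - \<kappa> k)"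
    using tangent nonneg
    by (intro set_integral_mono set_integral_diff(1)[OF True cost])
      (force simp: set_integrable_def integrable_indicator_iff emeasure_lborel_Icc_eq)+
  finally show ?thesis using T by (simp add: set_integral_const algebra_simps)
next
  \<comment> \<open>Then the output integral is the junk value \<open>0\<close>, and \<open>\<kappa> \<ge> \<kappa> k - k\<close> on \<open>[0, \<infinity>)\<close> suffices.\<close>
  case False
  then have "(LBINT t:{0..T}. f t) = 0"
    unfolding set_integrable_def set_lebesgue_integral_def by (rule not_integrable_integral_eq)
  moreover have "(LBINT t:{0..T}. \<kappa> k - k) \<le> (LBINT t:{0..T}. \<kappa> (f t))"
    using tangent nonneg
    by (intro set_integral_mono cost)
      (force simp: set_integrable_def integrable_indicator_iff emeasure_lborel_Icc_eq)+
  ultimately show ?thesis using T by (simp add: set_integral_const algebra_simps)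
qed

lemma nn_integral_lagrangian_le:
  fixes f g f' g' :: "'a \<Rightarrow> ennreal"
  assumes [measurable]: "f \<in> borel_measurable M" "g \<in> borel_measurable M"
    "f' \<in> borel_measurable M" "g' \<in> borel_measurable M"
    and pointwise: "\<And>\<omega>. \<omega> \<in> space M \<Longrightarrow> f' \<omega> + c * g' \<omega> \<le> f \<omega> + c * g \<omega>"
    and constraint: "(\<integral>\<^sup>+\<omega>. g \<omega> \<partial>M) \<le> (\<integral>\<^sup>+\<omega>. g' \<omega> \<partial>M)"
    and finite: "c * (\<integral>\<^sup>+\<omega>. g' \<omega> \<partial>M) \<noteq> \<infinity>"
  shows "(\<integral>\<^sup>+\<omega>. f' \<omega> \<partial>M) \<le> (\<integral>\<^sup>+\<omega>. f \<omega> \<partial>M)"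
proof -
  have "c * (\<integral>\<^sup>+\<omega>. g' \<omega> \<partial>M) + (\<integral>\<^sup>+\<omega>. f' \<omega> \<partial>M) = (\<integral>\<^sup>+\<omega>. f' \<omega> + c * g' \<omega> \<partial>M)"
    by (simp add: nn_integral_add nn_integral_cmult add.commute)
  also have "\<dots> \<le> (\<integral>\<^sup>+\<omega>. f \<omega> + c * g \<omega> \<partial>M)"
    by (rule nn_integral_mono) (rule pointwise)
  also have "\<dots> = (\<integral>\<^sup>+\<omega>. f \<omega> \<partial>M) + c * (\<integral>\<^sup>+\<omega>. g \<omega> \<partial>M)"
    by (simp add: nn_integral_add nn_integral_cmult)
  also have "\<dots> \<le> c * (\<integral>\<^sup>+\<omega>. g' \<omega> \<partial>M) + (\<integral>\<^sup>+\<omega>. f \<omega> \<partial>M)"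
    using constraint by (simp add: add.commute add_left_mono mult_left_mono)
  finally show ?thesis using finite by (simp add: ennreal_add_left_cancel_le)
qed

lemma linear_contract_lagrangian_le:
  fixes \<kappa> :: "real \<Rightarrow> real" and W :: "'a \<Rightarrow> real" and a :: "real \<Rightarrow> 'a \<Rightarrow> real"
  assumes T: "0 \<le> T" and gP: "0 < gP" and gA: "0 < gA"
    and tangent: "\<And>x. 0 \<le> x \<Longrightarrow> \<kappa> k + (x - k) \<le> \<kappa> x"
    and nonneg: "\<And>t. t \<in> {0..T} \<Longrightarrow> 0 \<le> a t \<omega>"
    and c: "c = gP / (gA + gP)"
    and lam: "lam = gP / gA * exp ((gA + gP) * \<beta> - gA * T * \<kappa> k)"
  shows "ennreal (exp (- gP * (Xproc x0 B (\<lambda>t \<omega>. k) T \<omega> - (c * Xproc x0 B (\<lambda>t \<omega>. k) T \<omega> + \<beta>))))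
       + ennreal lam
         * e2ennreal (- agent_util gA T \<kappa> (\<lambda>\<omega>. c * Xproc x0 B (\<lambda>t \<omega>. k) T \<omega> + \<beta>) (\<lambda>t \<omega>. k) \<omega>)
     \<le> ennreal (exp (- gP * (Xproc x0 B a T \<omega> - W \<omega>)))
       + ennreal lam * e2ennreal (- agent_util gA T \<kappa> W a \<omega>)"
proof (cases "set_integrable lborel {0..T} (\<lambda>t. \<kappa> (a t \<omega>))")
  case True
  define X where "X = x0 + T * k + B T \<omega>"
  define K where "K = (LBINT t:{0..T}. \<kappa> (a t \<omega>))"
  have lam_pos: "0 < lam" using gP gA by (simp add: lam)
  have "(gA + gP) * \<beta> - gA * T * \<kappa> k + - gA * (c * X + \<beta> - T * \<kappa> k) = - gP * (X - (c * X + \<beta>))"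
    using c gA gP by (simp add: field_simps) (metis distrib_left)
  then have "exp ((gA + gP) * \<beta> - gA * T * \<kappa> k) * exp (- gA * (c * X + \<beta> - T * \<kappa> k))
      = exp (- gP * (X - (c * X + \<beta>)))"
    by (simp only: mult_exp_exp)
  then have foc: "lam * gA * exp (- gA * (c * X + \<beta> - T * \<kappa> k)) = gP * exp (- gP * (X - (c * X + \<beta>)))"
    using gA by (simp add: lam)
  have "(LBINT t:{0..T}. a t \<omega>) - K \<le> T * k - T * \<kappa> k"
    unfolding K_def using T tangent nonneg True by (rule set_integral_output_minus_cost_le)
  then have "(Xproc x0 B a T \<omega> - W \<omega>) + (W \<omega> - K) \<le> (X - (c * X + \<beta>)) + (c * X + \<beta> - T * \<kappa> k)"
    by (simp add: Xproc_def X_def)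
  then have "exp (- gP * (X - (c * X + \<beta>))) + lam * exp (- gA * (c * X + \<beta> - T * \<kappa> k))
      \<le> exp (- gP * (Xproc x0 B a T \<omega> - W \<omega>)) + lam * exp (- gA * (W \<omega> - K))"
    using exp_utility_lagrangian_le[OF gP less_imp_le[OF lam_pos] foc] by blast
  moreover have "Xproc x0 B (\<lambda>t \<omega>. k) T \<omega> = X"
    using T by (simp add: Xproc_constant_action X_def)
  moreover have "agent_util gA T \<kappa> (\<lambda>\<omega>. c * Xproc x0 B (\<lambda>t \<omega>. k) T \<omega> + \<beta>) (\<lambda>t \<omega>. k) \<omega>
      = ereal (expU gA (c * X + \<beta> - T * \<kappa> k))"
    using T by (simp add: agent_util_constant_action Xproc_constant_action X_def)
  moreover have "agent_util gA T \<kappa> W a \<omega> = ereal (expU gA (W \<omega> - K))"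
    using True by (simp add: agent_util_def K_def)
  ultimately show ?thesis
    using lam_pos by (simp add: expU_def ennreal_mult[symmetric] ennreal_plus[symmetric] del: ennreal_plus)
next
  case False
  moreover have "0 < lam" using gP gA by (simp add: lam)
  ultimately show ?thesis by (simp add: agent_util_def ennreal_mult_top)
qed

lemma linear_contract_optimal:
  fixes \<kappa> :: "real \<Rightarrow> real"
  assumes BM: "brownian_motion_on M T B" and T: "0 < T" and gP: "0 < gP" and gA: "0 < gA"
    and \<kappa>: "continuous_on {0..} \<kappa>" and k: "0 \<le> k"
    and tangent: "\<And>x. 0 \<le> x \<Longrightarrow> \<kappa> k + (x - k) \<le> \<kappa> x"
    and c: "c = gP / (gA + gP)"
    and \<beta>: "\<beta> = gA * c\<^sup>2 * T / 2 + y0 + T * \<kappa> k - c * (x0 + T * k)"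
    and Wa: "(W, a) \<in> contracts_PC M B T gA \<kappa> y0"
  shows "principal_value M B T x0 gP W a
       \<le> principal_value M B T x0 gP (\<lambda>\<omega>. c * Xproc x0 B (\<lambda>t \<omega>. k) T \<omega> + \<beta>) (\<lambda>t \<omega>. k)"
proof -
  let ?W = "\<lambda>\<omega>. c * Xproc x0 B (\<lambda>t \<omega>. k) T \<omega> + \<beta>" and ?k = "\<lambda>t \<omega>. k"
  define lam where "lam = gP / gA * exp ((gA + gP) * \<beta> - gA * T * \<kappa> k)"
  have W: "W \<in> Wset M B T" and a: "a \<in> H2 M B T"
    and PC: "ereal (- exp (- gA * y0)) \<le> neg_expect M (agent_util gA T \<kappa> W a)"
    using Wa unfolding contracts_PC_def contracts_def expU_def by auto
  have W_lin: "?W \<in> Wset M B T" and k_H2: "?k \<in> H2 M B T"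
    using linear_contract_in_contracts[OF BM T k] unfolding contracts_def by auto
  note [measurable] =
    Wset_borel_measurable[OF BM W] Wset_borel_measurable[OF BM W_lin]
    Xproc_borel_measurable[OF BM less_imp_le[OF T] a]
    Xproc_borel_measurable[OF BM less_imp_le[OF T] k_H2]
    agent_util_measurable[OF BM less_imp_le[OF T] a W \<kappa>]
    agent_util_measurable[OF BM less_imp_le[OF T] k_H2 W_lin \<kappa>]
  have "(\<integral>\<^sup>+\<omega>. ennreal (exp (- gP * (Xproc x0 B ?k T \<omega> - ?W \<omega>))) \<partial>M)
      \<le> (\<integral>\<^sup>+\<omega>. ennreal (exp (- gP * (Xproc x0 B a T \<omega> - W \<omega>))) \<partial>M)"
  proof (rule nn_integral_lagrangian_le)
    show "ennreal (exp (- gP * (Xproc x0 B ?k T \<omega> - ?W \<omega>)))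
          + ennreal lam * e2ennreal (- agent_util gA T \<kappa> ?W ?k \<omega>)
        \<le> ennreal (exp (- gP * (Xproc x0 B a T \<omega> - W \<omega>)))
          + ennreal lam * e2ennreal (- agent_util gA T \<kappa> W a \<omega>)"
      if "\<omega> \<in> space M" for \<omega>
      using a that T gP gA tangent c lam_def unfolding H2_def
      by (intro linear_contract_lagrangian_le) auto
    have binding: "(\<integral>\<^sup>+\<omega>. e2ennreal (- agent_util gA T \<kappa> ?W ?k \<omega>) \<partial>M) = ennreal (exp (- gA * y0))"
      unfolding linear_contract_agent_disutility[OF BM T] \<beta> by (simp add: algebra_simps)
    then show "(\<integral>\<^sup>+\<omega>. e2ennreal (- agent_util gA T \<kappa> W a \<omega>) \<partial>M)
        \<le> (\<integral>\<^sup>+\<omega>. e2ennreal (- agent_util gA T \<kappa> ?W ?k \<omega>) \<partial>M)"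
      using PC by (simp add: neg_expect_ge_iff)
    show "ennreal lam * (\<integral>\<^sup>+\<omega>. e2ennreal (- agent_util gA T \<kappa> ?W ?k \<omega>) \<partial>M) \<noteq> \<infinity>"
      unfolding binding by (simp add: ennreal_mult_eq_top_iff)
  qed measurable
  then show ?thesis
    unfolding principal_value_def neg_expect_def expU_def
    by (simp add: ereal_minus_le_minus flip: less_eq_ennreal.rep_eq)
qed

theorem theorem3p4:
  fixes M :: "'a measure" and B :: "real \<Rightarrow> 'a \<Rightarrow> real"
    and T x0 y0 gP gA :: real
    and \<kappa> \<kappa>' :: "real \<Rightarrow> real"
  assumes T_pos: "0 < T"
    and BM: "brownian_motion_on M T B"
    and gP_pos: "0 < gP" and gA_pos: "0 < gA"
    and kappa_strict_convex: "strict_convex_on {0..} \<kappa>"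
    and kappa_cont: "continuous_on {0..} \<kappa>"
    and kappa_mono: "mono_on {0..} \<kappa>"
    and kappa_deriv: "\<And>x. 0 \<le> x \<Longrightarrow> (\<kappa> has_real_derivative \<kappa>' x) (at x within {0..})"
    and kappa'_inv: "bij_betw \<kappa>' {0..} {0..}"
  defines "kstar \<equiv> inv_into {0..} \<kappa>' 1"
  defines "astar \<equiv> (\<lambda>(t::real) (\<omega>::'a). kstar)"
  defines "c \<equiv> gP / (gA + gP)"
  defines "betastar \<equiv> T * gA * gP\<^sup>2 / (2 * (gA + gP)\<^sup>2) + y0 + T * \<kappa> kstar
                       - c * (x0 + T * kstar)"
  defines "Wstar \<equiv> (\<lambda>\<omega>. c * Xproc x0 B astar T \<omega> + betastar)"
  shows
    "(\<forall>W \<in> Wset M B T.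
        (W, astar) \<in> contracts M B T \<and>
        ((\<exists>\<alpha>>0. AE \<omega> in M.
            deriv (expU gP) (Xproc x0 B astar T \<omega> - W \<omega>)
              / deriv (expU gA) (W \<omega> - (LBINT t:{0..T}. \<kappa> (astar t \<omega>))) = \<alpha>)
         \<longleftrightarrow> (\<exists>\<beta>::real. AE \<omega> in M. W \<omega> = c * Xproc x0 B astar T \<omega> + \<beta>)))
     \<and> (\<forall>\<beta>::real. ((\<lambda>\<omega>. c * Xproc x0 B astar T \<omega> + \<beta>), astar) \<in> contracts_PC M B T gA \<kappa> y0
                   \<longleftrightarrow> \<beta> \<ge> betastar)
     \<and> (Wstar, astar) \<in> contracts_PC M B T gA \<kappa> y0
     \<and> (\<forall>(W, a) \<in> contracts_PC M B T gA \<kappa> y0.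
          principal_value M B T x0 gP W a \<le> principal_value M B T x0 gP Wstar astar)"
proof -
  have "\<kappa>' ` {0..} = {0..}" by (rule bij_betw_imp_surj_on[OF kappa'_inv])
  then have kstar: "0 \<le> kstar" "\<kappa>' kstar = 1"
    unfolding kstar_def using inv_into_into[of 1 \<kappa>' "{0..}"] f_inv_into_f[of 1 \<kappa>' "{0..}"] by auto
  have tangent: "\<kappa> kstar + (x - kstar) \<le> \<kappa> x" if "0 \<le> x" for x
    using convex_on_Ici_above_tangent[OF strict_convex_on_imp_convex_on[OF kappa_strict_convex]
        _ that kappa_deriv] kstar by fastforce
  have astar_H2: "astar \<in> H2 M B T"
    unfolding astar_def by (rule constant_action_H2[OF BM kstar(1)])
  have cost: "(LBINT t:{0..T}. \<kappa> (astar t \<omega>)) = T * \<kappa> kstar" for \<omega>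
    using T_pos by (simp add: astar_def set_integral_const)
  have betastar_eq: "betastar = gA * c\<^sup>2 * T / 2 + y0 + T * \<kappa> kstar - c * (x0 + T * kstar)"
    unfolding betastar_def c_def by (simp add: power_divide mult_ac)
  have PC: "((\<lambda>\<omega>. c * Xproc x0 B astar T \<omega> + \<beta>), astar) \<in> contracts_PC M B T gA \<kappa> y0
      \<longleftrightarrow> betastar \<le> \<beta>" for \<beta>
    unfolding astar_def betastar_eq by (rule linear_contract_PC_iff[OF BM T_pos gA_pos kstar(1)])
  have optimal: "principal_value M B T x0 gP W a \<le> principal_value M B T x0 gP Wstar astar"
    if "(W, a) \<in> contracts_PC M B T gA \<kappa> y0" for W a
    unfolding Wstar_def astar_def
    by (rule linear_contract_optimal[OF BM T_pos gP_pos gA_pos kappa_cont kstar(1) tangent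
          c_def[THEN meta_eq_to_obj_eq] betastar_eq that])
  have borch: "(\<exists>\<alpha>>0. AE \<omega> in M. deriv (expU gP) (Xproc x0 B astar T \<omega> - W \<omega>)
        / deriv (expU gA) (W \<omega> - (LBINT t:{0..T}. \<kappa> (astar t \<omega>))) = \<alpha>)
      \<longleftrightarrow> (\<exists>\<beta>. AE \<omega> in M. W \<omega> = c * Xproc x0 B astar T \<omega> + \<beta>)" for W
    unfolding cost c_def by (rule borch_rule_iff_affine[OF gP_pos gA_pos])
  show ?thesis
    using astar_H2 borch PC optimal by (auto simp: contracts_def Wstar_def)
qed

end
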